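(* Let $a,b\in\mathbb{R}$ with $0<b\le a$ and $ab=1$, and let $R=[-\frac a2,\frac a2]\times[-\frac b2,\frac b2]$. For every $\Lambda>a+b$ there exists $\tau_0=\tau_0(\Lambda)>0$ such that for every $\tau\in(0,\tau_0)$ the problem $$\min\Big\{\mathrm P_{|\cdot|_1}(\tilde R)+\tfrac1\tau\mathcal D(\tilde R,R):\ \tilde R\subset\mathbb{R}^2\text{ an axis-parallel rectangle},\ |\tilde R|=1,\ \mathrm{Bar}(\tilde R)=0\Big\}$$ has a unique minimizer $R'$. Moreover $R'=[-\frac{a'}2,\frac{a'}2]\times[-\frac{b'}2,\frac{b'}2]$ with $$a'=a-2x(\tau),\quad x(\tau)=x'\tau+O(\tau^2),\quad x'=\frac{2(a-b)}{b(a+b)},\qquad b'=b+2y(\tau),\quad y(\tau)=\frac{b\,x(\tau)}{a-2x(\tau)},$$ and $$a'+b'\le a+b,\quad |a'-a|\le \tau C(\Lambda),\quad |b'-b|\le\tau C(\Lambda),\quad |R\triangle R'|\le \tau C(\Lambda),$$ where $C(\Lambda)$ denotes a constant depending only on $\Lambda$.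
   Context: $|\nu|_1=|\nu_1|+|\nu_2|$, $|z|_\infty=\max\{|z_1|,|z_2|\}$. For a set of finite perimeter $E$, $\mathrm P_{|\cdot|_1}(E)=\int_{\partial^*E}|\nu_E|_1\,d\mathcal H^1$; for a rectangle with sides $\alpha,\beta$ this equals $2\alpha+2\beta$. $d_\infty(z,\partial F)=\inf\{|z-\hat z|_\infty:\hat z\in\partial F\}$, $\mathcal D(E,F)=\int_{E\triangle F}d_\infty(z,\partial F)\,dz$, $\mathrm{Bar}(E)=\int_Ex\,dx$. $O(g)$ denotes a function bounded in absolute value by a constant times $|g|$. *)

theory Defs
  imports "HOL-Analysis.Analysis"
begin

definition linf :: "real \<times> real \<Rightarrow> real" where
  "linf z = max \<bar>fst z\<bar> \<bar>snd z\<bar>"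

definition dinf :: "real \<times> real \<Rightarrow> (real \<times> real) set \<Rightarrow> real" where
  "dinf z S = Inf {linf (z - w) | w. w \<in> S}"

definition Dist :: "(real \<times> real) set \<Rightarrow> (real \<times> real) set \<Rightarrow> real" where
  "Dist E F = (LINT z:((E - F) \<union> (F - E))|lborel. dinf z (frontier F))"

definition Bar :: "(real \<times> real) set \<Rightarrow> real \<times> real" where
  "Bar E = ((LINT z:E|lborel. fst z), (LINT z:E|lborel. snd z))"

definition is_rect :: "(real \<times> real) set \<Rightarrow> bool" where
  "is_rect S \<longleftrightarrow> (\<exists>x1 x2 y1 y2. x1 < x2 \<and> y1 < y2 \<and> S = {x1..x2} \<times> {y1..y2})"

text \<open>Anisotropic (|.|_1) perimeter of an axis-parallel rectangle: 2 alpha + 2 beta.\<close>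
definition perim1_rect :: "(real \<times> real) set \<Rightarrow> real" where
  "perim1_rect S = 2 * (Sup (fst ` S) - Inf (fst ` S)) + 2 * (Sup (snd ` S) - Inf (snd ` S))"

definition centered_rect :: "real \<Rightarrow> real \<Rightarrow> (real \<times> real) set" where
  "centered_rect \<alpha> \<beta> = {-\<alpha>/2..\<alpha>/2} \<times> {-\<beta>/2..\<beta>/2}"

definition admissible :: "(real \<times> real) set \<Rightarrow> bool" where
  "admissible S \<longleftrightarrow> is_rect S \<and> measure lborel S = 1 \<and> Bar S = (0, 0)"

definition energy :: "real \<Rightarrow> (real \<times> real) set \<Rightarrow> (real \<times> real) set \<Rightarrow> real" where
  "energy \<tau> R S = perim1_rect S + Dist S R / \<tau>"

definition is_minimizer :: "real \<Rightarrow> (real \<times> real) set \<Rightarrow> (real \<times> real) set \<Rightarrow> bool" where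
  "is_minimizer \<tau> R S \<longleftrightarrow> admissible S \<and> (\<forall>T. admissible T \<longrightarrow> energy \<tau> R S \<le> energy \<tau> R T)"

end

theory Submission
  imports Defs
begin

text \<open>
  Admissible competitors are exactly the centred rectangles of width \<open>\<alpha>\<close> and height \<open>1/\<alpha>\<close>,
  so the problem is one-dimensional. Write \<open>\<alpha> = a - 2x\<close>. For \<open>0 \<le> x \<le> b/8\<close> the distance term
  can be integrated explicitly over the four strips that make up \<open>R \<triangle> R'\<close>, which turns the
  energy into an explicit function of \<open>x\<close>. Its derivative is strictly increasing there and,
  expanded around \<open>x' \<tau>\<close>, changes sign within \<open>O(\<tau>\<^sup>2)\<close> of it; the zero is the unique
  minimiser. Wider rectangles already lose on the perimeter, since \<open>\<alpha> + 1/\<alpha>\<close> increases for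
  \<open>\<alpha> \<ge> 1\<close>, and much narrower ones lose on the dissipation alone, which is of order \<open>b\<^sup>5/\<tau>\<close>.
\<close>

section \<open>The sup-norm distance to the boundary of a centred rectangle\<close>

lemma linf_nonneg: "0 \<le> linf z"
  unfolding linf_def by simp

lemma linf_add_le: "linf (p + q) \<le> linf p + linf q"
  unfolding linf_def by (cases p; cases q) (auto simp: max_def abs_if)

lemma linf_minus_commute: "linf (p - q) = linf (q - p)"
  unfolding linf_def by (cases p; cases q) auto

lemma linf_le_norm: "linf z \<le> norm z"
  unfolding linf_def
  by (cases z) (auto simp: norm_Pair intro: real_sqrt_ge_abs1 real_sqrt_ge_abs2)

lemma dinf_nonneg: "F \<noteq> {} \<Longrightarrow> 0 \<le> dinf z F"
  unfolding dinf_def by (intro cInf_greatest) (auto simp: linf_nonneg)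

lemma dinf_eqI:
  assumes "w \<in> F" "linf (z - w) = d" "\<And>w'. w' \<in> F \<Longrightarrow> d \<le> linf (z - w')"
  shows "dinf z F = d"
  unfolding dinf_def by (rule cInf_eq_minimum) (use assms in blast)+

lemma dinf_le_dinf_add_linf:
  assumes "F \<noteq> {}"
  shows "dinf z F \<le> dinf z' F + linf (z - z')"
proof -
  have "dinf z F \<le> linf (z - z') + linf (z' - w)" if "w \<in> F" for w
  proof -
    have "dinf z F \<le> linf (z - w)"
      unfolding dinf_def
    proof (rule cInf_lower)
      show "bdd_below {linf (z - w) | w. w \<in> F}"
        by (rule bdd_belowI[of _ 0]) (auto simp: linf_nonneg)
    qed (use that in blast)
    also have "\<dots> \<le> linf (z - z') + linf (z' - w)"
      using linf_add_le[of "z - z'" "z' - w"] by simp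
    finally show ?thesis .
  qed
  then have "dinf z F - linf (z - z') \<le> dinf z' F"
    unfolding dinf_def[of z'] using assms by (intro cInf_greatest) force+
  then show ?thesis by simp
qed

lemma continuous_on_dinf:
  assumes "F \<noteq> {}"
  shows "continuous_on S (\<lambda>z. dinf z F)"
proof (rule lipschitz_on_continuous_on[where L=1], rule lipschitz_onI)
  fix z z' :: "real \<times> real"
  have "\<bar>dinf z F - dinf z' F\<bar> \<le> linf (z - z')"
    using dinf_le_dinf_add_linf[OF assms, of z z'] dinf_le_dinf_add_linf[OF assms, of z' z]
      linf_minus_commute[of z z'] by linarith
  also have "\<dots> \<le> dist z z'"
    by (simp add: dist_norm linf_le_norm)
  finally show "dist (dinf z F) (dinf z' F) \<le> 1 * dist z z'"
    by (simp add: dist_real_def)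
qed simp

lemma centered_rect_eq_cbox: "centered_rect a b = cbox (-a/2, -b/2) (a/2, b/2)"
  unfolding centered_rect_def by (simp add: cbox_Pair_eq)

lemma mem_centered_rect: "z \<in> centered_rect a b \<longleftrightarrow> \<bar>fst z\<bar> \<le> a/2 \<and> \<bar>snd z\<bar> \<le> b/2"
  by (cases z) (auto simp: centered_rect_def abs_le_iff)

lemma centered_rect_borel: "centered_rect a b \<in> sets borel"
  unfolding centered_rect_eq_cbox by (simp add: borel_closed)

lemma mem_cbox_Pair: "(z :: real \<times> real) \<in> cbox (p, q) (r, s) \<longleftrightarrow> p \<le> fst z \<and> fst z \<le> r \<and> q \<le> snd z \<and> snd z \<le> s"
  by (cases z) (auto simp: cbox_interval)

lemma frontier_centered_rect:
  assumes "0 < a" "0 < b"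
  shows "frontier (centered_rect a b) =
    {z. \<bar>fst z\<bar> \<le> a/2 \<and> \<bar>snd z\<bar> \<le> b/2 \<and> (\<bar>fst z\<bar> = a/2 \<or> \<bar>snd z\<bar> = b/2)}"
proof -
  have "box (-a/2, -b/2) (a/2, b/2) = {-a/2<..<a/2} \<times> {-b/2<..<b/2}"
    by (auto simp: mem_box Basis_prod_def)
  then show ?thesis
    unfolding centered_rect_eq_cbox frontier_cbox by (auto simp: cbox_Pair_eq abs_le_iff)
qed

lemma frontier_centered_rect_nonempty:
  assumes "0 < a" "0 < b"
  shows "frontier (centered_rect a b) \<noteq> {}"
proof -
  have "(a/2, 0) \<in> frontier (centered_rect a b)"
    using assms by (simp add: frontier_centered_rect)
  then show ?thesis by blast
qed

lemma dinf_frontier_centered_rect_inside: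
  assumes "0 < a" "0 < b" "\<bar>u\<bar> \<le> a/2" "\<bar>v\<bar> \<le> b/2"
  shows "dinf (u, v) (frontier (centered_rect a b)) = min (a/2 - \<bar>u\<bar>) (b/2 - \<bar>v\<bar>)"
proof (rule dinf_eqI)
  let ?w = "if a/2 - \<bar>u\<bar> \<le> b/2 - \<bar>v\<bar> then (if 0 \<le> u then a/2 else -a/2, v)
           else (u, if 0 \<le> v then b/2 else -b/2)"
  show "?w \<in> frontier (centered_rect a b)" "linf ((u, v) - ?w) = min (a/2 - \<bar>u\<bar>) (b/2 - \<bar>v\<bar>)"
    using assms by (auto simp: frontier_centered_rect linf_def abs_if min_def max_def)
  fix w assume "w \<in> frontier (centered_rect a b)"
  then have "\<bar>fst w\<bar> \<le> a/2" "\<bar>snd w\<bar> \<le> b/2" "\<bar>fst w\<bar> = a/2 \<or> \<bar>snd w\<bar> = b/2"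
    using assms by (auto simp: frontier_centered_rect)
  moreover have "\<bar>u - fst w\<bar> \<le> linf ((u, v) - w)" "\<bar>v - snd w\<bar> \<le> linf ((u, v) - w)"
    by (auto simp: linf_def)
  ultimately show "min (a/2 - \<bar>u\<bar>) (b/2 - \<bar>v\<bar>) \<le> linf ((u, v) - w)"
    by arith
qed

lemma dinf_frontier_centered_rect_above_below:
  assumes "0 < a" "0 < b" "\<bar>u\<bar> \<le> a/2" "b/2 \<le> \<bar>v\<bar>"
  shows "dinf (u, v) (frontier (centered_rect a b)) = \<bar>v\<bar> - b/2"
proof (rule dinf_eqI)
  show "(u, sgn v * b/2) \<in> frontier (centered_rect a b)" "linf ((u, v) - (u, sgn v * b/2)) = \<bar>v\<bar> - b/2"
    using assms by (auto simp: frontier_centered_rect linf_def sgn_if abs_if)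
  fix w assume "w \<in> frontier (centered_rect a b)"
  then have "\<bar>snd w\<bar> \<le> b/2"
    using assms by (auto simp: frontier_centered_rect)
  moreover have "\<bar>v - snd w\<bar> \<le> linf ((u, v) - w)"
    by (auto simp: linf_def)
  ultimately show "\<bar>v\<bar> - b/2 \<le> linf ((u, v) - w)"
    by arith
qed

section \<open>Integrating the distance over the symmetric difference\<close>

lemma has_integral_of_real_derivative:
  fixes f F :: "real \<Rightarrow> real"
  assumes "a \<le> b" "\<And>x. x \<in> {a..b} \<Longrightarrow> (F has_real_derivative f x) (at x)"
  shows "(f has_integral (F b - F a)) {a..b}"
  using assms by (intro fundamental_theorem_of_calculus)
    (auto simp: has_real_derivative_iff_has_vector_derivative[symmetric] intro: has_field_derivative_at_within)

lemma has_integral_cbox_Pair_iterated: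
  fixes f :: "real \<times> real \<Rightarrow> real"
  assumes cont: "continuous_on (cbox (p, q) (r, s)) f"
    and inner: "\<And>u. u \<in> {p..r} \<Longrightarrow> ((\<lambda>v. f (u, v)) has_integral g u) {q..s}"
    and outer: "(g has_integral I) {p..r}"
  shows "(f has_integral I) (cbox (p, q) (r, s))"
proof -
  have "integral (cbox (p, q) (r, s)) f = integral (cbox p r) (\<lambda>u. integral (cbox q s) (\<lambda>v. f (u, v)))"
    by (rule integral_prod_continuous[OF cont])
  also have "\<dots> = integral {p..r} g"
    unfolding interval_cbox[symmetric] by (rule integral_cong) (use inner integral_unique in blast)
  also have "\<dots> = I"
    using outer by (rule integral_unique)
  finally show ?thesis
    using integrable_continuous[OF cont] has_integral_integral by metis
qed

lemma has_integral_Un_negligible_diff: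
  fixes f :: "'n::euclidean_space \<Rightarrow> real"
  assumes "(f has_integral i) S" "(f has_integral j) S'" "negligible (S \<inter> S')"
    and "negligible (S \<union> S' - T)" "T \<subseteq> S \<union> S'"
  shows "(f has_integral (i + j)) T"
proof (subst has_integral_spike_set_eq)
  show "(f has_integral (i + j)) (S \<union> S')"
    using assms(1-3) by (rule has_integral_Un)
  show "negligible {x \<in> S \<union> S' - T. f x \<noteq> 0}"
    using assms(4) by (rule negligible_subset) auto
  have "{x \<in> T - (S \<union> S'). f x \<noteq> 0} = {}"
    using assms(5) by blast
  then show "negligible {x \<in> T - (S \<union> S'). f x \<noteq> 0}"
    by (metis negligible_empty)
qed

lemma negligible_vertical_line: "negligible {z :: real \<times> real. fst z = c}"
proof -
  have "(1 :: real, 0 :: real) \<in> Basis"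
    by (simp add: Basis_prod_def)
  from negligible_standard_hyperplane[OF this, of c] show ?thesis
    by (simp add: inner_prod_def)
qed

lemma negligible_horizontal_line: "negligible {z :: real \<times> real. snd z = c}"
proof -
  have "(0 :: real, 1 :: real) \<in> Basis"
    by (simp add: Basis_prod_def)
  from negligible_standard_hyperplane[OF this, of c] show ?thesis
    by (simp add: inner_prod_def)
qed

lemma has_integral_min_tent:
  fixes s c :: real
  assumes "0 \<le> s" "s \<le> c"
  shows "((\<lambda>v. min s (c - \<bar>v\<bar>)) has_integral (2 * c * s - s\<^sup>2)) {-c..c}"
proof -
  have "((\<lambda>v. c + v) has_integral s\<^sup>2 / 2) {-c..s - c}"
  proof (rule has_integral_eq_rhs)
    show "((\<lambda>v. c + v) has_integral ((c * (s - c) + (s - c)\<^sup>2 / 2) - (c * (-c) + (-c)\<^sup>2 / 2))) {-c..s - c}"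
      using assms by (intro has_integral_of_real_derivative) (auto intro!: derivative_eq_intros)
  qed (simp add: power2_eq_square field_simps)
  then have left: "((\<lambda>v. min s (c - \<bar>v\<bar>)) has_integral s\<^sup>2 / 2) {-c..s - c}"
    by (rule has_integral_eq[rotated]) (use assms in \<open>auto simp: min_def\<close>)
  have "((\<lambda>v. s) has_integral (s * (c - s) - s * (s - c))) {s - c..c - s}"
    using assms by (intro has_integral_of_real_derivative) (auto intro!: derivative_eq_intros)
  then have middle: "((\<lambda>v. min s (c - \<bar>v\<bar>)) has_integral (s * (c - s) - s * (s - c))) {s - c..c - s}"
    by (rule has_integral_eq[rotated]) (use assms in \<open>auto simp: min_def\<close>)
  have "((\<lambda>v. c - v) has_integral s\<^sup>2 / 2) {c - s..c}"
  proof (rule has_integral_eq_rhs)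
    show "((\<lambda>v. c - v) has_integral ((c * c - c\<^sup>2 / 2) - (c * (c - s) - (c - s)\<^sup>2 / 2))) {c - s..c}"
      using assms by (intro has_integral_of_real_derivative) (auto intro!: derivative_eq_intros)
  qed (simp add: power2_eq_square field_simps)
  then have right: "((\<lambda>v. min s (c - \<bar>v\<bar>)) has_integral s\<^sup>2 / 2) {c - s..c}"
    by (rule has_integral_eq[rotated]) (use assms in \<open>auto simp: min_def\<close>)
  have "((\<lambda>v. min s (c - \<bar>v\<bar>)) has_integral (s\<^sup>2 / 2 + (s * (c - s) - s * (s - c)) + s\<^sup>2 / 2)) {-c..c}"
    using assms by (intro has_integral_combine[OF _ _ has_integral_combine[OF _ _ left middle] right]) auto
  then show ?thesis
    by (simp add: power2_eq_square algebra_simps)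
qed

lemma has_integral_dinf_vertical_strip:
  assumes "0 < a" "0 < b" and u: "\<And>u. u \<in> {p..r} \<Longrightarrow> 0 \<le> a/2 - \<bar>u\<bar> \<and> a/2 - \<bar>u\<bar> \<le> b/2"
    and I: "((\<lambda>u. b * (a/2 - \<bar>u\<bar>) - (a/2 - \<bar>u\<bar>)\<^sup>2) has_integral I) {p..r}"
  shows "((\<lambda>z. dinf z (frontier (centered_rect a b))) has_integral I) (cbox (p, -b/2) (r, b/2))"
proof (rule has_integral_cbox_Pair_iterated[OF _ _ I])
  show "continuous_on (cbox (p, -b/2) (r, b/2)) (\<lambda>z. dinf z (frontier (centered_rect a b)))"
    using assms(1,2) by (intro continuous_on_dinf frontier_centered_rect_nonempty)
  fix u assume "u \<in> {p..r}"
  note u = u[OF this]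
  have "((\<lambda>v. min (a/2 - \<bar>u\<bar>) (b/2 - \<bar>v\<bar>)) has_integral (b * (a/2 - \<bar>u\<bar>) - (a/2 - \<bar>u\<bar>)\<^sup>2)) {-b/2..b/2}"
    using has_integral_min_tent[of "a/2 - \<bar>u\<bar>" "b/2"] u by simp
  then show "((\<lambda>v. dinf (u, v) (frontier (centered_rect a b))) has_integral
      b * (a/2 - \<bar>u\<bar>) - (a/2 - \<bar>u\<bar>)\<^sup>2) {-b/2..b/2}"
    by (rule has_integral_eq[rotated]) (use u assms(1,2) in \<open>auto simp: dinf_frontier_centered_rect_inside\<close>)
qed

lemma has_integral_side_profile:
  fixes a b al :: real
  assumes "0 \<le> al" "al \<le> a"
  defines "I \<equiv> b * ((a - al)/2)\<^sup>2 / 2 - ((a - al)/2)^3 / 3"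
  shows "((\<lambda>u. b * (a/2 - \<bar>u\<bar>) - (a/2 - \<bar>u\<bar>)\<^sup>2) has_integral I) {al/2..a/2}" (is ?right)
    and "((\<lambda>u. b * (a/2 - \<bar>u\<bar>) - (a/2 - \<bar>u\<bar>)\<^sup>2) has_integral I) {-a/2..-al/2}"
proof -
  have "((\<lambda>u. b * (a/2 - u) - (a/2 - u)\<^sup>2) has_integral I) {al/2..a/2}"
  proof (rule has_integral_eq_rhs)
    let ?F = "\<lambda>u. (a/2 - u)^3 / 3 - b * (a/2 - u)\<^sup>2 / 2"
    show "((\<lambda>u. b * (a/2 - u) - (a/2 - u)\<^sup>2) has_integral (?F (a/2) - ?F (al/2))) {al/2..a/2}"
      using assms by (intro has_integral_of_real_derivative)
        (auto intro!: derivative_eq_intros simp: power2_eq_square field_simps)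
  qed (simp add: I_def field_simps)
  then show ?right
    by (rule has_integral_eq[rotated]) (use assms in \<open>auto simp: I_def\<close>)
  then show "((\<lambda>u. b * (a/2 - \<bar>u\<bar>) - (a/2 - \<bar>u\<bar>)\<^sup>2) has_integral I) {-a/2..-al/2}"
    using has_integral_reflect_real[of "\<lambda>u. b * (a/2 - \<bar>u\<bar>) - (a/2 - \<bar>u\<bar>)\<^sup>2" I "a/2" "al/2"]
    by simp
qed

lemma has_integral_dinf_horizontal_strip:
  assumes "0 < al" "al \<le> a" "0 < b" and v: "\<And>v. v \<in> {q..s} \<Longrightarrow> b/2 \<le> \<bar>v\<bar>"
    and J: "((\<lambda>v. \<bar>v\<bar> - b/2) has_integral J) {q..s}"
  shows "((\<lambda>z. dinf z (frontier (centered_rect a b))) has_integral (al * J)) (cbox (-al/2, q) (al/2, s))"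
proof (rule has_integral_cbox_Pair_iterated)
  show "continuous_on (cbox (-al/2, q) (al/2, s)) (\<lambda>z. dinf z (frontier (centered_rect a b)))"
    using assms(1-3) by (intro continuous_on_dinf frontier_centered_rect_nonempty) auto
  fix u assume "u \<in> {-al/2..al/2}"
  show "((\<lambda>v. dinf (u, v) (frontier (centered_rect a b))) has_integral J) {q..s}"
    using J by (rule has_integral_eq[rotated])
      (use \<open>u \<in> {-al/2..al/2}\<close> v assms(1-3) in \<open>auto simp: dinf_frontier_centered_rect_above_below\<close>)
next
  show "((\<lambda>u. J) has_integral al * J) {-al/2..al/2}"
    using has_integral_const_real[of J "-al/2" "al/2"] assms(1) by simp
qed

lemma has_integral_abs_minus:
  fixes c e :: real
  assumes "0 \<le> c" "c \<le> e"
  shows "((\<lambda>v. \<bar>v\<bar> - c) has_integral (e - c)\<^sup>2 / 2) {c..e}" (is ?right)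
    and "((\<lambda>v. \<bar>v\<bar> - c) has_integral (e - c)\<^sup>2 / 2) {-e..-c}"
proof -
  have "((\<lambda>v. v - c) has_integral ((e - c)\<^sup>2 / 2 - (c - c)\<^sup>2 / 2)) {c..e}"
    using assms by (intro has_integral_of_real_derivative) (auto intro!: derivative_eq_intros)
  then show ?right
    by (rule has_integral_eq[rotated, THEN has_integral_eq_rhs]) (use assms in auto)
  then show "((\<lambda>v. \<bar>v\<bar> - c) has_integral (e - c)\<^sup>2 / 2) {-e..-c}"
    using has_integral_reflect_real[of "\<lambda>v. \<bar>v\<bar> - c" _ e c] by simp
qed

lemma has_integral_dinf_inner_diff:
  assumes "0 < al" "al \<le> a" "a - al \<le> b" "0 < b" "b \<le> be"
  shows "((\<lambda>z. dinf z (frontier (centered_rect a b))) has_integral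
           2 * (b * ((a - al)/2)\<^sup>2 / 2 - ((a - al)/2)^3 / 3)) (centered_rect a b - centered_rect al be)"
proof -
  let ?right = "cbox (al/2, -b/2) (a/2, b/2)" and ?left = "cbox (-a/2, -b/2) (-al/2, b/2)"
  have strip: "0 \<le> a/2 - \<bar>u\<bar> \<and> a/2 - \<bar>u\<bar> \<le> b/2" if "u \<in> {al/2..a/2} \<or> u \<in> {-a/2..-al/2}" for u
    using that assms by auto
  have "((\<lambda>z. dinf z (frontier (centered_rect a b))) has_integral
           b * ((a - al)/2)\<^sup>2 / 2 - ((a - al)/2)^3 / 3 + (b * ((a - al)/2)\<^sup>2 / 2 - ((a - al)/2)^3 / 3))
        (centered_rect a b - centered_rect al be)"
  proof (rule has_integral_Un_negligible_diff)
    show "((\<lambda>z. dinf z (frontier (centered_rect a b))) has_integral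
           b * ((a - al)/2)\<^sup>2 / 2 - ((a - al)/2)^3 / 3) ?right"
      using assms strip by (intro has_integral_dinf_vertical_strip has_integral_side_profile) auto
    show "((\<lambda>z. dinf z (frontier (centered_rect a b))) has_integral
           b * ((a - al)/2)\<^sup>2 / 2 - ((a - al)/2)^3 / 3) ?left"
      using assms strip by (intro has_integral_dinf_vertical_strip has_integral_side_profile) auto
    have "?right \<inter> ?left = {}"
      using assms by (auto simp: mem_cbox_Pair)
    then show "negligible (?right \<inter> ?left)"
      by simp
    have "?right \<union> ?left - (centered_rect a b - centered_rect al be) \<subseteq> {z. fst z = al/2} \<union> {z. fst z = -al/2}"
      using assms by (auto simp: mem_cbox_Pair mem_centered_rect abs_le_iff)
    then show "negligible (?right \<union> ?left - (centered_rect a b - centered_rect al be))"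
      by (rule negligible_subset[rotated]) (intro negligible_Un negligible_vertical_line)
    show "centered_rect a b - centered_rect al be \<subseteq> ?right \<union> ?left"
      using assms by (auto simp: mem_cbox_Pair mem_centered_rect abs_le_iff)
  qed
  then show ?thesis
    by (simp only: mult_2)
qed

lemma has_integral_dinf_outer_diff:
  assumes "0 < al" "al \<le> a" "0 < b" "b \<le> be"
  shows "((\<lambda>z. dinf z (frontier (centered_rect a b))) has_integral al * ((be - b)/2)\<^sup>2)
           (centered_rect al be - centered_rect a b)"
proof -
  let ?top = "cbox (-al/2, b/2) (al/2, be/2)" and ?bottom = "cbox (-al/2, -be/2) (al/2, -b/2)"
  have "((\<lambda>z. dinf z (frontier (centered_rect a b))) has_integral
           al * (((be/2) - b/2)\<^sup>2 / 2) + al * (((be/2) - b/2)\<^sup>2 / 2))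
        (centered_rect al be - centered_rect a b)"
  proof (rule has_integral_Un_negligible_diff)
    show "((\<lambda>z. dinf z (frontier (centered_rect a b))) has_integral al * (((be/2) - b/2)\<^sup>2 / 2)) ?top"
      using assms by (intro has_integral_dinf_horizontal_strip has_integral_abs_minus) auto
    show "((\<lambda>z. dinf z (frontier (centered_rect a b))) has_integral al * (((be/2) - b/2)\<^sup>2 / 2)) ?bottom"
      using assms has_integral_abs_minus(2)[of "b/2" "be/2"]
      by (intro has_integral_dinf_horizontal_strip) auto
    have "?top \<inter> ?bottom = {}"
      using assms by (auto simp: mem_cbox_Pair)
    then show "negligible (?top \<inter> ?bottom)"
      by simp
    have "?top \<union> ?bottom - (centered_rect al be - centered_rect a b) \<subseteq> {z. snd z = b/2} \<union> {z. snd z = -b/2}"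
      using assms by (auto simp: mem_cbox_Pair mem_centered_rect abs_le_iff)
    then show "negligible (?top \<union> ?bottom - (centered_rect al be - centered_rect a b))"
      by (rule negligible_subset[rotated]) (intro negligible_Un negligible_horizontal_line)
    show "centered_rect al be - centered_rect a b \<subseteq> ?top \<union> ?bottom"
      using assms by (auto simp: mem_cbox_Pair mem_centered_rect abs_le_iff)
  qed
  then show ?thesis
    by (rule has_integral_eq_rhs) (simp add: power2_eq_square field_simps)
qed

lemma set_integrable_dinf_centered_rect_diff:
  assumes "0 < a" "0 < b" "S \<in> sets borel"
  shows "set_integrable lborel (centered_rect c d - S) (\<lambda>z. dinf z (frontier (centered_rect a b)))"
proof (rule set_integrable_subset)
  show "set_integrable lborel (centered_rect c d) (\<lambda>z. dinf z (frontier (centered_rect a b)))"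
    unfolding set_integrable_def centered_rect_eq_cbox[of c d] using assms(1,2)
    by (intro borel_integrable_compact compact_cbox continuous_on_dinf frontier_centered_rect_nonempty)
qed (use assms centered_rect_borel in auto)

lemma Dist_nonneg:
  assumes "frontier F \<noteq> {}"
  shows "0 \<le> Dist E F"
  unfolding Dist_def set_lebesgue_integral_def
  by (rule integral_nonneg_AE) (auto intro!: AE_I2 mult_nonneg_nonneg dinf_nonneg[OF assms])

lemma Dist_centered_rect:
  assumes "0 < al" "al \<le> a" "0 < b" "b \<le> be"
  shows "Dist (centered_rect al be) (centered_rect a b) =
    al * ((be - b)/2)\<^sup>2 + integral (centered_rect a b - centered_rect al be) (\<lambda>z. dinf z (frontier (centered_rect a b)))"
proof -
  let ?d = "\<lambda>z. dinf z (frontier (centered_rect a b))"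
  let ?R = "centered_rect a b" and ?Q = "centered_rect al be"
  have "0 < a"
    using assms by simp
  then have inner: "set_integrable lborel (?R - ?Q) ?d" and outer: "set_integrable lborel (?Q - ?R) ?d"
    using assms(3) centered_rect_borel by (auto intro: set_integrable_dinf_centered_rect_diff)
  have "Dist ?Q ?R = (LINT z:(?Q - ?R)|lborel. ?d z) + (LINT z:(?R - ?Q)|lborel. ?d z)"
    unfolding Dist_def by (rule set_integral_Un[OF _ outer inner]) auto
  also have "(LINT z:(?Q - ?R)|lborel. ?d z) = al * ((be - b)/2)\<^sup>2"
    using set_borel_integral_eq_integral(2)[OF outer] has_integral_dinf_outer_diff[OF assms]
    by (simp add: integral_unique)
  also have "(LINT z:(?R - ?Q)|lborel. ?d z) = integral (?R - ?Q) ?d"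
    by (rule set_borel_integral_eq_integral(2)[OF inner])
  finally show ?thesis .
qed

lemma Dist_centered_rect_ge:
  assumes "0 < al" "al \<le> a" "0 < b" "b \<le> be"
  shows "al * ((be - b)/2)\<^sup>2 \<le> Dist (centered_rect al be) (centered_rect a b)"
proof -
  have "0 < a"
    using assms by simp
  then have "set_integrable lborel (centered_rect a b - centered_rect al be) (\<lambda>z. dinf z (frontier (centered_rect a b)))"
    using assms(3) centered_rect_borel by (intro set_integrable_dinf_centered_rect_diff)
  then have "0 \<le> integral (centered_rect a b - centered_rect al be) (\<lambda>z. dinf z (frontier (centered_rect a b)))"
    using \<open>0 < a\<close> assms(3)
    by (intro integral_nonneg set_borel_integral_eq_integral(1) dinf_nonneg frontier_centered_rect_nonempty)
  then show ?thesis
    using Dist_centered_rect[OF assms] by simp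
qed

lemma Dist_centered_rect_eq:
  assumes "0 < al" "al \<le> a" "a - al \<le> b" "0 < b" "b \<le> be"
  shows "Dist (centered_rect al be) (centered_rect a b) =
    al * ((be - b)/2)\<^sup>2 + 2 * (b * ((a - al)/2)\<^sup>2 / 2 - ((a - al)/2)^3 / 3)"
  using Dist_centered_rect[of al a b be] has_integral_dinf_inner_diff[OF assms] assms
  by (simp add: integral_unique)

section \<open>Admissible rectangles\<close>

lemma box_eq_cbox: "{x1..x2} \<times> {y1..y2} = cbox (x1, y1) (x2 :: real, y2 :: real)"
  by (auto simp: mem_cbox_Pair)

lemma measure_lborel_box:
  fixes x1 x2 y1 y2 :: real
  assumes "x1 \<le> x2" "y1 \<le> y2"
  shows "measure lborel ({x1..x2} \<times> {y1..y2}) = (x2 - x1) * (y2 - y1)"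
proof -
  have "measure lborel ({x1..x2} \<times> {y1..y2}) = measure lborel (cbox x1 x2) * measure lborel (cbox y1 y2)"
    unfolding box_eq_cbox by (rule content_Pair)
  also have "\<dots> = (x2 - x1) * (y2 - y1)"
    using assms by (metis interval_cbox content_real)
  finally show ?thesis .
qed

lemma set_integral_cbox_eq_integral:
  fixes f :: "real \<times> real \<Rightarrow> real"
  assumes "continuous_on (cbox l h) f"
  shows "(LINT z:cbox l h|lborel. f z) = integral (cbox l h) f"
  using borel_integrable_compact[OF compact_cbox assms]
  by (intro set_borel_integral_eq_integral(2)) (simp add: set_integrable_def)

lemma Bar_box:
  fixes x1 x2 y1 y2 :: real
  assumes "x1 \<le> x2" "y1 \<le> y2"
  shows "Bar ({x1..x2} \<times> {y1..y2}) = ((x2\<^sup>2 - x1\<^sup>2) / 2 * (y2 - y1), (y2\<^sup>2 - y1\<^sup>2) / 2 * (x2 - x1))"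
proof -
  have "(fst has_integral (x2\<^sup>2 - x1\<^sup>2) / 2 * (y2 - y1)) (cbox (x1, y1) (x2, y2))"
  proof (rule has_integral_cbox_Pair_iterated[where g="\<lambda>u. u * (y2 - y1)"])
    show "continuous_on (cbox (x1, y1) (x2, y2)) fst"
      by (intro continuous_intros)
    show "((\<lambda>v. fst (u, v)) has_integral u * (y2 - y1)) {y1..y2}" for u
      using has_integral_const_real[of u y1 y2] assms by (simp add: mult.commute)
    have "((\<lambda>u. u * (y2 - y1)) has_integral (x2\<^sup>2 / 2 * (y2 - y1) - x1\<^sup>2 / 2 * (y2 - y1))) {x1..x2}"
      using assms by (intro has_integral_of_real_derivative) (auto intro!: derivative_eq_intros)
    then show "((\<lambda>u. u * (y2 - y1)) has_integral (x2\<^sup>2 - x1\<^sup>2) / 2 * (y2 - y1)) {x1..x2}"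
      by (simp add: left_diff_distrib diff_divide_distrib)
  qed
  moreover have "(snd has_integral (y2\<^sup>2 - y1\<^sup>2) / 2 * (x2 - x1)) (cbox (x1, y1) (x2, y2))"
  proof (rule has_integral_cbox_Pair_iterated[where g="\<lambda>u. (y2\<^sup>2 - y1\<^sup>2) / 2"])
    show "continuous_on (cbox (x1, y1) (x2, y2)) snd"
      by (intro continuous_intros)
    have "((\<lambda>v. v) has_integral (y2\<^sup>2 / 2 - y1\<^sup>2 / 2)) {y1..y2}"
      using assms by (intro has_integral_of_real_derivative) (auto intro!: derivative_eq_intros)
    then show "((\<lambda>v. snd (u, v)) has_integral (y2\<^sup>2 - y1\<^sup>2) / 2) {y1..y2}" for u
      by (simp add: diff_divide_distrib)
    show "((\<lambda>u. (y2\<^sup>2 - y1\<^sup>2) / 2) has_integral (y2\<^sup>2 - y1\<^sup>2) / 2 * (x2 - x1)) {x1..x2}"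
      using has_integral_const_real[of "(y2\<^sup>2 - y1\<^sup>2) / 2" x1 x2] assms by (simp add: mult.commute)
  qed
  ultimately show ?thesis
    unfolding Bar_def box_eq_cbox
    by (simp add: set_integral_cbox_eq_integral continuous_on_fst continuous_on_snd continuous_on_id integral_unique)
qed

lemma admissible_iff_centered_rect: "admissible S \<longleftrightarrow> (\<exists>al > 0. S = centered_rect al (1/al))"
proof
  assume "admissible S"
  then obtain x1 x2 y1 y2 where box: "x1 < x2" "y1 < y2" "S = {x1..x2} \<times> {y1..y2}"
    and area: "measure lborel S = 1" and bar: "Bar S = (0, 0)"
    unfolding admissible_def is_rect_def by blast
  have "x2\<^sup>2 = x1\<^sup>2" "y2\<^sup>2 = y1\<^sup>2"
    using bar Bar_box[of x1 x2 y1 y2] box by auto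
  then have sym: "x1 = -x2" "y1 = -y2"
    using box by (auto simp: power2_eq_iff)
  have "(x2 - x1) * (y2 - y1) = 1"
    using area measure_lborel_box[of x1 x2 y1 y2] box by simp
  moreover have "0 < x2"
    using box sym by simp
  ultimately have "y2 = 1 / (4 * x2)"
    using sym by (simp add: field_simps)
  then have "S = centered_rect (2 * x2) (1 / (2 * x2))"
    using box(3) sym by (simp add: centered_rect_def)
  then show "\<exists>al > 0. S = centered_rect al (1/al)"
    using box sym by (intro exI[of _ "2 * x2"]) auto
next
  assume "\<exists>al > 0. S = centered_rect al (1/al)"
  then obtain al where al: "0 < al" and S: "S = {-al/2..al/2} \<times> {-(1/al)/2..(1/al)/2}"
    unfolding centered_rect_def by blast
  have "-al/2 < al/2" "-(1/al)/2 < (1/al)/2"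
    using al by auto
  then have "is_rect S"
    unfolding is_rect_def S by blast
  moreover have "measure lborel S = 1"
    unfolding S using measure_lborel_box[of "-al/2" "al/2" "-(1/al)/2" "(1/al)/2"] al by simp
  moreover have "Bar S = (0, 0)"
    unfolding S using Bar_box[of "-al/2" "al/2" "-(1/al)/2" "(1/al)/2"] al by simp
  ultimately show "admissible S"
    unfolding admissible_def by blast
qed

lemma energy_centered_rect:
  assumes "0 < al" "0 < be"
  shows "energy t R (centered_rect al be) = 2 * al + 2 * be + Dist (centered_rect al be) R / t"
  using assms by (simp add: energy_def perim1_rect_def centered_rect_def)

lemma measure_sym_diff_centered_rect_le:
  fixes a b al be :: real
  assumes "0 < al" "al \<le> a" "0 < b" "b \<le> be"
  shows "measure lborel ((centered_rect a b - centered_rect al be) \<union> (centered_rect al be - centered_rect a b))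
     \<le> (a - al) * b + al * (be - b)"
proof -
  let ?right = "{al/2..a/2} \<times> {-b/2..b/2}" and ?left = "{-a/2..-al/2} \<times> {-b/2..b/2}"
  let ?top = "{-al/2..al/2} \<times> {b/2..be/2}" and ?bottom = "{-al/2..al/2} \<times> {-be/2..-b/2}"
  have closed: "?right \<in> sets lborel" "?left \<in> sets lborel" "?top \<in> sets lborel" "?bottom \<in> sets lborel"
    by (auto intro!: borel_closed closed_Times)
  have "(centered_rect a b - centered_rect al be) \<union> (centered_rect al be - centered_rect a b)
      \<subseteq> ?right \<union> ?left \<union> ?top \<union> ?bottom"
    using assms by (auto simp: mem_centered_rect abs_le_iff)
  then have "measure lborel ((centered_rect a b - centered_rect al be) \<union> (centered_rect al be - centered_rect a b))
     \<le> measure lborel (?right \<union> ?left \<union> ?top \<union> ?bottom)"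
    by (intro measure_mono_fmeasurable fmeasurable_compact)
      (auto intro: centered_rect_borel intro!: compact_Un compact_Times)
  also have "\<dots> \<le> measure lborel ?right + measure lborel ?left + measure lborel ?top + measure lborel ?bottom"
    using closed by (intro measure_Un_le order.trans[OF measure_Un_le] add_right_mono sets.Un) auto
  also have "\<dots> = (a - al) * b + al * (be - b)"
    using assms by (simp add: measure_lborel_box field_simps)
  finally show ?thesis .
qed

section \<open>The reduced one-dimensional energy\<close>

lemma strict_min_at_root_of_increasing_deriv:
  fixes f f' :: "real \<Rightarrow> real"
  assumes cont: "continuous_on {l..u} f"
    and deriv: "\<And>x. l < x \<Longrightarrow> x < u \<Longrightarrow> (f has_real_derivative f' x) (at x)"
    and mono: "strict_mono_on {l..u} f'"
    and root: "xs \<in> {l..u}" "f' xs = 0"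
    and x: "x \<in> {l..u}" "x \<noteq> xs"
  shows "f xs < f x"
proof (cases "xs < x")
  case True
  show ?thesis
  proof (rule DERIV_pos_imp_increasing_open[OF True])
    fix s assume s: "xs < s" "s < x"
    then have "l < s" "s < u"
      using root x by auto
    moreover have "f' xs < f' s"
      using strict_mono_onD[OF mono, of xs s] root x s by auto
    ultimately show "\<exists>y. (f has_real_derivative y) (at s) \<and> 0 < y"
      using deriv root(2) by auto
  qed (use cont root x in \<open>auto intro: continuous_on_subset\<close>)
next
  case False
  then have "x < xs"
    using x by simp
  show ?thesis
  proof (rule DERIV_neg_imp_decreasing_open[OF \<open>x < xs\<close>])
    fix s assume s: "x < s" "s < xs"
    then have "l < s" "s < u"
      using root x by auto
    moreover have "f' s < f' xs"
      using strict_mono_onD[OF mono, of s xs] root x s by auto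
    ultimately show "\<exists>y. (f has_real_derivative y) (at s) \<and> y < 0"
      using deriv root(2) by auto
  qed (use cont root x in \<open>auto intro: continuous_on_subset\<close>)
qed

text \<open>The energy of \<open>centered_rect (a - 2 x) (1 / (a - 2 x))\<close> relative to \<open>centered_rect a b\<close>,
  but only for \<open>0 \<le> x \<le> b/8\<close>: there the numerator of the last term is \<open>Dist\<close>, integrated over
  the two removed side strips and the two added top and bottom strips.\<close>
definition shrink_energy :: "real \<Rightarrow> real \<Rightarrow> real \<Rightarrow> real \<Rightarrow> real" where
  "shrink_energy a b t x = 2 * (a - 2*x) + 2 / (a - 2*x) + (b * x\<^sup>2 - 2 * x^3 / 3 + b\<^sup>2 * x\<^sup>2 / (a - 2*x)) / t"

definition shrink_energy_deriv :: "real \<Rightarrow> real \<Rightarrow> real \<Rightarrow> real \<Rightarrow> real" where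
  "shrink_energy_deriv a b t x = -4 + 4 / (a - 2*x)\<^sup>2 + (2 * b * x - 2 * x\<^sup>2 + (1 / (a - 2*x)\<^sup>2 - b\<^sup>2) / 2) / t"

lemma continuous_on_shrink_energy:
  "t \<noteq> 0 \<Longrightarrow> c < a/2 \<Longrightarrow> continuous_on {d..c} (shrink_energy a b t)"
  unfolding shrink_energy_def by (intro continuous_intros) auto

lemma continuous_on_shrink_energy_deriv:
  "t \<noteq> 0 \<Longrightarrow> c < a/2 \<Longrightarrow> continuous_on {d..c} (shrink_energy_deriv a b t)"
  unfolding shrink_energy_deriv_def by (intro continuous_intros) auto

lemma has_real_derivative_shrink_energy:
  assumes "a * b = 1" "x < a/2"
  shows "(shrink_energy a b t has_real_derivative shrink_energy_deriv a b t x) (at x)"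
proof -
  have ne: "a - 2*x \<noteq> 0"
    using assms(2) by simp
  have d1: "((\<lambda>x. 2 * (a - 2*x)) has_real_derivative -4) (at x)"
    by (auto intro!: derivative_eq_intros)
  have d2: "((\<lambda>x. 2 / (a - 2*x)) has_real_derivative 4 / (a - 2*x)\<^sup>2) (at x)"
    using ne by (auto intro!: derivative_eq_intros simp: power2_eq_square)
  have d3: "((\<lambda>x. b * x\<^sup>2 - 2 * x^3 / 3 + b\<^sup>2 * x\<^sup>2 / (a - 2*x)) has_real_derivative
      2 * b * x - 2 * x\<^sup>2 + b\<^sup>2 * (2 * x * (a - 2*x) + 2 * x\<^sup>2) / (a - 2*x)\<^sup>2) (at x)"
    using ne by (auto intro!: derivative_eq_intros simp: power2_eq_square algebra_simps)
  have "(shrink_energy a b t has_real_derivative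
      -4 + 4 / (a - 2*x)\<^sup>2 + (2 * b * x - 2 * x\<^sup>2 + b\<^sup>2 * (2 * x * (a - 2*x) + 2 * x\<^sup>2) / (a - 2*x)\<^sup>2) / t) (at x)"
    unfolding shrink_energy_def[abs_def] by (rule DERIV_add[OF DERIV_add[OF d1 d2] DERIV_cdivide[OF d3]])
  moreover have "b\<^sup>2 * (2 * x * (a - 2*x) + 2 * x\<^sup>2) / (a - 2*x)\<^sup>2 = (1 / (a - 2*x)\<^sup>2 - b\<^sup>2) / 2"
  proof -
    have "b * (a - 2*x) = 1 - 2 * b * x"
      using assms(1) by (simp add: algebra_simps)
    then have e: "b\<^sup>2 * (2 * x * (a - 2*x) + 2 * x\<^sup>2) = (1 - (b * (a - 2*x))\<^sup>2) / 2"
      by (simp add: power2_eq_square field_simps)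
    have "(1 - (b * (a - 2*x))\<^sup>2) / 2 / (a - 2*x)\<^sup>2 = (1 / (a - 2*x)\<^sup>2 - b\<^sup>2) / 2"
      unfolding power_mult_distrib using ne by (simp add: field_simps)
    then show ?thesis
      unfolding e .
  qed
  ultimately show ?thesis
    unfolding shrink_energy_deriv_def by simp
qed

lemma strict_mono_on_shrink_energy_deriv:
  assumes "0 < b" "b \<le> a" "0 < t"
  shows "strict_mono_on {0..b/8} (shrink_energy_deriv a b t)"
proof (rule strict_mono_onI)
  fix x y assume "x \<in> {0..b/8}" "y \<in> {0..b/8}" "x < y"
  then have xy: "0 \<le> x" "x < y" "y \<le> b/8"
    by auto
  have "0 < a - 2*y" "a - 2*y < a - 2*x"
    using assms xy by auto
  then have inv: "c / (a - 2*x)\<^sup>2 < c / (a - 2*y)\<^sup>2" if "0 < c" for c :: real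
    using that by (intro divide_strict_left_mono power_strict_mono) auto
  have "(2 * b * y - 2 * y\<^sup>2) - (2 * b * x - 2 * x\<^sup>2) = 2 * (y - x) * (b - x - y)"
    by (simp add: power2_eq_square algebra_simps)
  moreover have "0 < 2 * (y - x) * (b - x - y)"
    using xy assms by (intro mult_pos_pos) auto
  ultimately have "2 * b * x - 2 * x\<^sup>2 < 2 * b * y - 2 * y\<^sup>2"
    by linarith
  moreover have "(1 / (a - 2*x)\<^sup>2 - b\<^sup>2) / 2 < (1 / (a - 2*y)\<^sup>2 - b\<^sup>2) / 2"
    using inv[of 1] by simp
  ultimately have "2 * b * x - 2 * x\<^sup>2 + (1 / (a - 2*x)\<^sup>2 - b\<^sup>2) / 2 < 2 * b * y - 2 * y\<^sup>2 + (1 / (a - 2*y)\<^sup>2 - b\<^sup>2) / 2"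
    by (rule add_strict_mono)
  then have "(2 * b * x - 2 * x\<^sup>2 + (1 / (a - 2*x)\<^sup>2 - b\<^sup>2) / 2) / t < (2 * b * y - 2 * y\<^sup>2 + (1 / (a - 2*y)\<^sup>2 - b\<^sup>2) / 2) / t"
    using assms(3) by (rule divide_strict_right_mono)
  then show "shrink_energy_deriv a b t x < shrink_energy_deriv a b t y"
    unfolding shrink_energy_deriv_def using inv[of 4] by linarith
qed

text \<open>\<open>x\<^sub>0 = x' t\<close> is the zero of the part of \<open>t \<cdot> shrink_energy_deriv\<close> that is linear in \<open>t\<close> and
  \<open>x\<close>; the remainder is of order \<open>t x + x\<^sup>2\<close> because \<open>w\<close> is close to \<open>4 b\<^sup>3 x\<close>.\<close>
lemma shrink_energy_deriv_expansion:
  fixes a b t x :: real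
  assumes "0 < t" "0 < b"
  defines "x\<^sub>0 \<equiv> 2 * t * (1 - b\<^sup>2) / (b * (1 + b\<^sup>2))"
    and "w \<equiv> 1 / (a - 2*x)\<^sup>2 - b\<^sup>2"
  shows "t * shrink_energy_deriv a b t x = 2 * b * (1 + b\<^sup>2) * (x - x\<^sub>0) + (4 * t * w - 2 * x\<^sup>2 + (w - 4 * b^3 * x) / 2)"
proof -
  have "0 < b * (1 + b\<^sup>2)"
    using assms(2) by (simp add: add_pos_nonneg)
  then have "2 * b * (1 + b\<^sup>2) * x\<^sub>0 = 4 * t * (1 - b\<^sup>2)"
    unfolding x\<^sub>0_def by (simp add: field_simps)
  moreover have "t * shrink_energy_deriv a b t x = -4 * t + 4 * t * (w + b\<^sup>2) + 2 * b * x - 2 * x\<^sup>2 + w / 2"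
    unfolding shrink_energy_deriv_def w_def using assms(1) by (simp add: field_simps)
  ultimately show ?thesis
    by algebra
qed

lemma inverse_square_one_minus_bounds:
  fixes u :: real
  assumes "0 \<le> u" "u \<le> 1/8"
  shows "1 + 4 * u \<le> 1 / (1 - 2*u)\<^sup>2" and "1 / (1 - 2*u)\<^sup>2 \<le> 1 + 4 * u + 20 * u\<^sup>2"
proof -
  have pos: "0 < (1 - 2*u)\<^sup>2"
    using assms by simp
  have "(1 + 4 * u) * (1 - 2*u)\<^sup>2 = 1 - u\<^sup>2 * (12 - 16 * u)"
    by (simp add: power2_eq_square algebra_simps)
  also have "\<dots> \<le> 1"
    using assms by simp
  finally show "1 + 4 * u \<le> 1 / (1 - 2*u)\<^sup>2"
    using pos by (simp add: le_divide_eq)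
  have "(1 + 4 * u + 20 * u\<^sup>2) * (1 - 2*u)\<^sup>2 = 1 + u\<^sup>2 * (8 - 64 * u) + 80 * u^4"
    by (simp add: power2_eq_square power4_eq_xxxx algebra_simps)
  moreover have "0 \<le> u\<^sup>2 * (8 - 64 * u)"
    using assms by simp
  ultimately have "1 \<le> (1 + 4 * u + 20 * u\<^sup>2) * (1 - 2*u)\<^sup>2"
    by (simp add: add_increasing2)
  then show "1 / (1 - 2*u)\<^sup>2 \<le> 1 + 4 * u + 20 * u\<^sup>2"
    using pos by (simp add: divide_le_eq)
qed

lemma inverse_square_width_bounds:
  fixes a b x :: real
  assumes "a * b = 1" "0 < b" "b \<le> 1" "0 \<le> x" "x \<le> b/8"
  shows "4 * b^3 * x \<le> 1 / (a - 2*x)\<^sup>2 - b\<^sup>2" and "1 / (a - 2*x)\<^sup>2 - b\<^sup>2 \<le> 4 * b^3 * x + 20 * x\<^sup>2"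
proof -
  define u where "u = b * x"
  have "u \<le> 1 * (1/8)"
    unfolding u_def using assms by (intro mult_mono) auto
  then have u: "0 \<le> u" "u \<le> 1/8"
    using assms by (simp_all add: u_def)
  have "a - 2*x = (1 - 2*u) / b"
    using assms(1,2) unfolding u_def by (simp add: field_simps)
  then have w: "1 / (a - 2*x)\<^sup>2 - b\<^sup>2 = b\<^sup>2 * (1 / (1 - 2*u)\<^sup>2 - 1)"
    by (simp add: power_divide algebra_simps)
  have "4 * b^3 * x = b\<^sup>2 * (4 * u)"
    unfolding u_def by (simp add: power2_eq_square power3_eq_cube)
  also have "\<dots> \<le> b\<^sup>2 * (1 / (1 - 2*u)\<^sup>2 - 1)"
    using inverse_square_one_minus_bounds(1)[OF u] by (intro mult_left_mono) auto
  finally show "4 * b^3 * x \<le> 1 / (a - 2*x)\<^sup>2 - b\<^sup>2"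
    unfolding w .
  have "b\<^sup>2 * (1 / (1 - 2*u)\<^sup>2 - 1) \<le> b\<^sup>2 * (4 * u + 20 * u\<^sup>2)"
    using inverse_square_one_minus_bounds(2)[OF u] by (intro mult_left_mono) auto
  also have "\<dots> = 4 * b^3 * x + 20 * b^4 * x\<^sup>2"
    unfolding u_def by (simp add: power2_eq_square power3_eq_cube power4_eq_xxxx algebra_simps)
  also have "\<dots> \<le> 4 * b^3 * x + 20 * x\<^sup>2"
    using assms(2,3) by (simp add: power_le_one mult_left_le_one_le)
  finally show "1 / (a - 2*x)\<^sup>2 - b\<^sup>2 \<le> 4 * b^3 * x + 20 * x\<^sup>2"
    unfolding w .
qed

section \<open>Minimisers for small time steps\<close>

lemma strict_mono_on_add_inverse: "strict_mono_on {1..} (\<lambda>x :: real. x + 1/x)"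
proof (rule strict_mono_onI)
  fix x y :: real assume "x \<in> {1..}" "y \<in> {1..}" "x < y"
  then have "1 * 1 < x * y"
    by (intro mult_le_less_imp_less) auto
  then have "0 < (y - x) * (x * y - 1) / (x * y)"
    using \<open>x \<in> {1..}\<close> \<open>x < y\<close> by (intro divide_pos_pos mult_pos_pos) auto
  moreover have "y + 1/y - (x + 1/x) = (y - x) * (x * y - 1) / (x * y)"
    using \<open>x \<in> {1..}\<close> \<open>x < y\<close> by (simp add: field_simps)
  ultimately show "x + 1/x < y + 1/y"
    by linarith
qed

definition step_constant :: "real \<Rightarrow> real" where
  "step_constant L = 100 * L^3 + 20 * L + 20"

text \<open>All constants are expressed through \<open>L\<close>, an upper bound for \<open>a\<close>; the theorem takes
  \<open>L = max \<Lambda> 3\<close>.\<close>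
locale small_step =
  fixes a b L t :: real
  assumes ab: "a * b = 1"
    and b_pos: "0 < b" and b_le_a: "b \<le> a"
    and L_ge_3: "3 \<le> L" and a_lt_L: "a < L"
    and t_pos: "0 < t" and t_small: "t < 1 / (1000 * L^6)"
begin

lemma b_le_1: "b \<le> 1"
proof (rule ccontr)
  assume "\<not> b \<le> 1"
  then have "1 * 1 < b * a"
    using b_le_a by (intro mult_strict_mono) auto
  then show False
    using ab by (simp add: mult.commute)
qed

lemma a_eq: "a = 1 / b"
  using ab b_pos by (simp add: field_simps)

lemma a_ge_1: "1 \<le> a"
  using b_le_1 b_pos by (simp add: a_eq)

lemma one_lt_b_L: "1 < b * L"
  using ab a_lt_L b_pos by (metis mult.commute mult_strict_right_mono)

lemma L6_t_lt_1: "1000 * L^6 * t < 1"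
  using t_small L_ge_3 by (simp add: field_simps)

lemma L_power_bounds: "1 \<le> L^2" "L^2 \<le> L^6" "L^3 \<le> L^6"
  using L_ge_3 by (auto intro: power_increasing one_le_power)

definition x_lin :: real where
  "x_lin = 2 * (a - b) / (b * (a + b)) * t"

definition err :: real where
  "err = 100 * L^3 * t\<^sup>2"

lemma x_lin_eq: "x_lin = 2 * t * (1 - b\<^sup>2) / (b * (1 + b\<^sup>2))"
proof -
  have e: "a - b = (1 - b\<^sup>2) / b" "b * (a + b) = 1 + b\<^sup>2"
    using b_pos by (simp_all add: a_eq field_simps power2_eq_square)
  have "0 < 1 + b\<^sup>2"
    by (simp add: add_pos_nonneg)
  then show ?thesis
    using b_pos unfolding x_lin_def e by (simp add: field_simps)
qed

lemma x_lin_nonneg: "0 \<le> x_lin"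
  using b_le_a b_pos t_pos unfolding x_lin_def by simp

lemma x_lin_le: "x_lin \<le> 2 * L * t"
proof -
  have "x_lin = (2 * t / b) * ((1 - b\<^sup>2) / (1 + b\<^sup>2))"
    unfolding x_lin_eq by (simp add: field_simps)
  also have "\<dots> \<le> 2 * t / b"
    using t_pos b_pos by (intro mult_left_le) (auto simp: add_pos_nonneg)
  also have "\<dots> = 2 * t * a"
    by (simp add: a_eq)
  also have "\<dots> \<le> 2 * L * t"
    using a_lt_L t_pos by simp
  finally show ?thesis .
qed

lemma err_nonneg: "0 \<le> err"
  using L_ge_3 by (simp add: err_def)

lemma err_le_t: "err \<le> t"
proof -
  have "100 * L^3 * t \<le> 1000 * L^6 * t"
    using L_power_bounds t_pos by (intro mult_right_mono) auto
  then have "100 * L^3 * t \<le> 1"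
    using L6_t_lt_1 by linarith
  then show ?thesis
    using t_pos unfolding err_def by (simp add: power2_eq_square mult_left_le_one_le mult.assoc[symmetric])
qed

text \<open>This margin lets the linear part of the expansion beat its remainder at \<open>x_lin \<plusminus> err\<close>.\<close>
lemma err_margin: "100 * (L\<^sup>2 * t\<^sup>2) < b * err"
proof -
  have "0 < 100 * L\<^sup>2 * t\<^sup>2"
    using L_ge_3 t_pos by simp
  then have "(100 * L\<^sup>2 * t\<^sup>2) * 1 < (100 * L\<^sup>2 * t\<^sup>2) * (b * L)"
    using one_lt_b_L by (intro mult_strict_left_mono)
  also have "\<dots> = b * err"
    unfolding err_def by (simp add: power2_eq_square power3_eq_cube)
  finally show ?thesis
    by simp
qed

lemma x_lin_plus_err_le: "x_lin + err \<le> 3 * L * t"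
proof -
  have "t \<le> L * t"
    using L_ge_3 t_pos by simp
  then show ?thesis
    using x_lin_le err_le_t by linarith
qed

lemma x_lin_plus_err_lt: "x_lin + err < b/8"
proof -
  have "24 * L\<^sup>2 * t \<le> 1000 * L^6 * t"
    using L_power_bounds t_pos by (intro mult_right_mono) auto
  then have "24 * L * t * L < b * L"
    using L6_t_lt_1 one_lt_b_L by (simp add: power2_eq_square algebra_simps)
  then have "24 * L * t < b"
    using L_ge_3 by (simp add: ac_simps)
  then show ?thesis
    using x_lin_plus_err_le by simp
qed

lemma shrink_energy_deriv_pos: "0 < shrink_energy_deriv a b t (x_lin + err)"
proof -
  define x where "x = x_lin + err"
  define w where "w = 1 / (a - 2*x)\<^sup>2 - b\<^sup>2"
  have x: "0 \<le> x" "x \<le> b/8" "x \<le> 3 * L * t"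
    using x_lin_nonneg err_nonneg x_lin_plus_err_lt x_lin_plus_err_le by (auto simp: x_def)
  have w: "4 * b^3 * x \<le> w"
    unfolding w_def using inverse_square_width_bounds(1)[OF ab b_pos b_le_1 x(1,2)] .
  moreover have "0 \<le> 4 * b^3 * x"
    using b_pos x by simp
  ultimately have "0 \<le> w"
    by linarith
  then have "0 \<le> 4 * t * w"
    using t_pos by simp
  moreover have "x\<^sup>2 \<le> 9 * (L\<^sup>2 * t\<^sup>2)"
    using power_mono[OF x(3), of 2] x(1) by (simp add: power_mult_distrib)
  moreover have "2 * (b * err) \<le> 2 * b * (1 + b\<^sup>2) * err"
    using b_pos err_nonneg by (simp add: algebra_simps)
  moreover have "t * shrink_energy_deriv a b t x = 2 * b * (1 + b\<^sup>2) * err + (4 * t * w - 2 * x\<^sup>2 + (w - 4 * b^3 * x) / 2)"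
    using shrink_energy_deriv_expansion[OF t_pos b_pos, of a x] unfolding x_lin_eq[symmetric] w_def x_def
    by simp
  moreover have "0 \<le> L\<^sup>2 * t\<^sup>2"
    by simp
  ultimately have "0 < t * shrink_energy_deriv a b t x"
    using w err_margin by argo
  then show ?thesis
    using t_pos by (simp add: x_def zero_less_mult_iff)
qed

lemma shrink_energy_deriv_neg:
  assumes "0 \<le> x_lin - err"
  shows "shrink_energy_deriv a b t (x_lin - err) < 0"
proof -
  define x where "x = x_lin - err"
  define w where "w = 1 / (a - 2*x)\<^sup>2 - b\<^sup>2"
  have x: "0 \<le> x" "x \<le> b/8" "x \<le> 2 * L * t"
    using assms x_lin_plus_err_lt err_nonneg x_lin_le by (auto simp: x_def)
  have w: "w \<le> 4 * b^3 * x + 20 * x\<^sup>2"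
    unfolding w_def using inverse_square_width_bounds(2)[OF ab b_pos b_le_1 x(1,2)] .
  have "x \<le> 1"
    using x(2) b_le_1 by simp
  then have "x\<^sup>2 \<le> x"
    using x(1) by (simp add: power2_eq_square mult_left_le_one_le)
  moreover have "b^3 * x \<le> x"
    using b_pos b_le_1 x(1) by (simp add: power_le_one mult_left_le_one_le)
  ultimately have "w \<le> 24 * x"
    using w by linarith
  then have "4 * t * w \<le> 4 * t * (24 * (2 * L * t))"
    using x(3) t_pos by (simp add: order.trans[OF _ mult_left_mono])
  also have "\<dots> \<le> 64 * (L\<^sup>2 * t\<^sup>2)"
    using L_ge_3 t_pos by (simp add: power2_eq_square)
  finally have tw: "4 * t * w \<le> 64 * (L\<^sup>2 * t\<^sup>2)" .
  have "0 \<le> x\<^sup>2"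
    by simp
  moreover have "x\<^sup>2 \<le> 4 * (L\<^sup>2 * t\<^sup>2)"
    using power_mono[OF x(3), of 2] x(1) by (simp add: power_mult_distrib)
  moreover have "2 * (b * err) \<le> 2 * b * (1 + b\<^sup>2) * err"
    using b_pos err_nonneg by (simp add: algebra_simps)
  moreover have "t * shrink_energy_deriv a b t x = - (2 * b * (1 + b\<^sup>2) * err) + (4 * t * w - 2 * x\<^sup>2 + (w - 4 * b^3 * x) / 2)"
    using shrink_energy_deriv_expansion[OF t_pos b_pos, of a x] unfolding x_lin_eq[symmetric] w_def x_def
    by simp
  moreover have "0 \<le> L\<^sup>2 * t\<^sup>2"
    by simp
  ultimately have "t * shrink_energy_deriv a b t x < 0"
    using w tw err_margin by argo
  then show ?thesis
    using t_pos by (simp add: x_def mult_less_0_iff)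
qed

lemma shrink_energy_deriv_at_0: "shrink_energy_deriv a b t 0 \<le> 0"
proof -
  have e: "1 / a\<^sup>2 = b\<^sup>2"
    by (simp add: a_eq power_one_over)
  have "shrink_energy_deriv a b t 0 = -4 + 4 * (1 / a\<^sup>2) + (1 / a\<^sup>2 - b\<^sup>2) / 2 / t"
    by (simp add: shrink_energy_deriv_def)
  also have "\<dots> = 4 * b\<^sup>2 - 4"
    unfolding e by simp
  also have "\<dots> \<le> 0"
    using b_le_1 b_pos by (simp add: power_le_one)
  finally show ?thesis .
qed

lemma shrink_energy_deriv_root:
  obtains xs where "0 \<le> xs" "\<bar>xs - x_lin\<bar> \<le> err" "xs \<le> b/8" "shrink_energy_deriv a b t xs = 0"
proof -
  have "continuous_on {0..x_lin + err} (shrink_energy_deriv a b t)"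
    using x_lin_plus_err_lt b_le_a b_pos t_pos by (intro continuous_on_shrink_energy_deriv) auto
  then obtain xs where xs: "0 \<le> xs" "xs \<le> x_lin + err" "shrink_energy_deriv a b t xs = 0"
    using IVT'[of "shrink_energy_deriv a b t" 0 0 "x_lin + err"] shrink_energy_deriv_at_0
      shrink_energy_deriv_pos x_lin_nonneg err_nonneg by fastforce
  have "x_lin - err \<le> xs"
  proof (rule ccontr)
    assume "\<not> x_lin - err \<le> xs"
    then have "shrink_energy_deriv a b t xs < shrink_energy_deriv a b t (x_lin - err)"
      using xs x_lin_plus_err_lt err_nonneg
      by (intro strict_mono_onD[OF strict_mono_on_shrink_energy_deriv[OF b_pos b_le_a t_pos]]) auto
    then show False
      using xs(1,3) shrink_energy_deriv_neg \<open>\<not> x_lin - err \<le> xs\<close> by fastforce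
  qed
  then show ?thesis
    using xs x_lin_plus_err_lt by (intro that) auto
qed

lemma shrink_energy_strict_min:
  assumes "xs \<in> {0..b/8}" "shrink_energy_deriv a b t xs = 0" "x \<in> {0..b/8}" "x \<noteq> xs"
  shows "shrink_energy a b t xs < shrink_energy a b t x"
proof (rule strict_min_at_root_of_increasing_deriv[where f = "shrink_energy a b t" and f' = "shrink_energy_deriv a b t"])
  show "continuous_on {0..b/8} (shrink_energy a b t)"
    using b_pos b_le_a t_pos by (intro continuous_on_shrink_energy) auto
  show "(shrink_energy a b t has_real_derivative shrink_energy_deriv a b t x) (at x)" if "0 < x" "x < b/8" for x
    using that b_le_a by (intro has_real_derivative_shrink_energy[OF ab]) auto
  show "strict_mono_on {0..b/8} (shrink_energy_deriv a b t)"
    using b_pos b_le_a t_pos by (rule strict_mono_on_shrink_energy_deriv)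
qed (use assms in auto)

lemma b_le_inverse:
  assumes "0 < al" "al \<le> a"
  shows "b \<le> 1/al"
proof -
  have "1/a \<le> 1/al"
    using assms by (intro divide_left_mono) auto
  then show ?thesis
    by (simp add: a_eq)
qed

lemma energy_eq_shrink_energy:
  assumes "a - b/4 \<le> al" "al \<le> a"
  shows "energy t (centered_rect a b) (centered_rect al (1/al)) = shrink_energy a b t ((a - al)/2)"
proof -
  define x where "x = (a - al)/2"
  have al: "0 < al" "a - 2*x = al"
    using assms b_pos b_le_a by (auto simp: x_def field_simps)
  have "1 - b * al = 2 * b * x"
    using ab unfolding x_def by (simp add: algebra_simps)
  then have diff: "1/al - b = 2 * b * x / al"
    using al by (simp add: field_simps)
  have "al * ((1/al - b)/2)\<^sup>2 = b\<^sup>2 * x\<^sup>2 / al"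
    unfolding diff using al(1) by (simp add: power2_eq_square)
  moreover have "Dist (centered_rect al (1/al)) (centered_rect a b) =
      al * ((1/al - b)/2)\<^sup>2 + 2 * (b * x\<^sup>2 / 2 - x^3 / 3)"
    using Dist_centered_rect_eq[of al a b "1/al"] al assms b_pos b_le_inverse by (simp add: x_def)
  ultimately have "Dist (centered_rect al (1/al)) (centered_rect a b) = b * x\<^sup>2 - 2 * x^3 / 3 + b\<^sup>2 * x\<^sup>2 / al"
    by simp
  then show ?thesis
    using al by (simp add: energy_centered_rect shrink_energy_def x_def[symmetric])
qed

lemma energy_wider:
  assumes "a < al"
  shows "2 * a + 2 * b < energy t (centered_rect a b) (centered_rect al (1/al))"
proof -
  have "a + b < al + 1/al"
    using strict_mono_onD[OF strict_mono_on_add_inverse, of a al] a_ge_1 assms by (simp add: a_eq)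
  moreover have "0 \<le> Dist (centered_rect al (1/al)) (centered_rect a b) / t"
    using t_pos b_pos a_ge_1 by (simp add: Dist_nonneg frontier_centered_rect_nonempty)
  ultimately show ?thesis
    using assms a_ge_1 by (simp add: energy_centered_rect)
qed

lemma Dist_much_narrower_gt:
  assumes "0 < al" "al < a - b/4"
  shows "b^5 / 64 < Dist (centered_rect al (1/al)) (centered_rect a b)"
proof -
  have "1/a < 1/al"
    using assms b_pos by (intro divide_strict_left_mono) auto
  then have b_lt: "b < 1/al"
    by (simp add: a_eq)
  have "b * al < b * (a - b/4)"
    using assms b_pos by simp
  also have "\<dots> = 1 - b\<^sup>2/4"
    using ab by (simp add: power2_eq_square algebra_simps)
  finally have "b\<^sup>2/4 < 1 - b * al"
    by simp
  then have "(b\<^sup>2/4)\<^sup>2 < (1 - b * al)\<^sup>2"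
    using b_pos by (intro power_strict_mono) auto
  moreover have "b/4 < (1/al)/4"
    using b_lt by simp
  ultimately have "(b\<^sup>2/4)\<^sup>2 * (b/4) < (1 - b * al)\<^sup>2 * ((1/al)/4)"
    using b_pos by (intro mult_strict_mono) auto
  also have "\<dots> = al * ((1/al - b)/2)\<^sup>2"
    using assms by (simp add: field_simps power2_eq_square)
  also have "\<dots> \<le> Dist (centered_rect al (1/al)) (centered_rect a b)"
    using assms b_pos b_lt by (intro Dist_centered_rect_ge) auto
  finally show ?thesis
    by (simp add: power2_eq_square eval_nat_numeral)
qed

text \<open>A rectangle that is much narrower pays more in dissipation alone than the
  perimeter of \<open>R\<close>, because \<open>t\<close> is small compared to \<open>L\<^sup>-\<^sup>6\<close>.\<close>
lemma energy_much_narrower: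
  assumes "0 < al" "al < a - b/4"
  shows "2 * a + 2 * b < energy t (centered_rect a b) (centered_rect al (1/al))"
proof -
  let ?D = "Dist (centered_rect al (1/al)) (centered_rect a b)"
  have "1 < (b * L)^5"
    using one_lt_b_L by simp
  have "4 * L * 1 < (125/8 * L) * (b * L)^5"
    by (rule mult_strict_mono) (use L_ge_3 \<open>1 < (b * L)^5\<close> in auto)
  also have "\<dots> = (b^5 / 64) * (1000 * L^6)"
    by (simp add: power_mult_distrib eval_nat_numeral)
  also have "\<dots> \<le> (b^5 / 64) * (1 / t)"
    using t_small t_pos L_ge_3 b_pos by (intro mult_left_mono) (simp_all add: field_simps)
  also have "\<dots> < ?D * (1 / t)"
    using Dist_much_narrower_gt[OF assms] t_pos by (intro mult_strict_right_mono) auto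
  finally have "4 * L < ?D / t"
    by simp
  moreover have "a + b < 2 * L"
    using a_lt_L b_le_a by simp
  moreover have "0 < 2 * al + 2 / al"
    using assms(1) by (simp add: add_pos_pos)
  ultimately show ?thesis
    using assms by (simp add: energy_centered_rect)
qed

lemma shrink_energy_at_0: "shrink_energy a b t 0 = 2 * a + 2 * b"
  by (simp add: shrink_energy_def a_eq)

lemma optimal_energy_le:
  assumes "xs \<in> {0..b/8}" "shrink_energy_deriv a b t xs = 0"
  shows "energy t (centered_rect a b) (centered_rect (a - 2*xs) (1/(a - 2*xs))) \<le> 2 * a + 2 * b"
proof -
  have "shrink_energy a b t xs \<le> shrink_energy a b t 0"
    using shrink_energy_strict_min[OF assms, of 0] b_pos by (cases "xs = 0") auto
  then show ?thesis
    using assms energy_eq_shrink_energy[of "a - 2*xs"] by (simp add: shrink_energy_at_0)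
qed

lemma optimal_energy_less:
  assumes xs: "xs \<in> {0..b/8}" "shrink_energy_deriv a b t xs = 0"
    and al: "0 < al" "al \<noteq> a - 2*xs"
  shows "energy t (centered_rect a b) (centered_rect (a - 2*xs) (1/(a - 2*xs)))
    < energy t (centered_rect a b) (centered_rect al (1/al))"
proof -
  consider "a < al" | "a - b/4 \<le> al" "al \<le> a" | "al < a - b/4"
    by linarith
  then show ?thesis
  proof cases
    case 1
    then show ?thesis
      using optimal_energy_le[OF xs] energy_wider by fastforce
  next
    case 2
    have "shrink_energy a b t xs < shrink_energy a b t ((a - al)/2)"
      using 2 al xs by (intro shrink_energy_strict_min) auto
    then show ?thesis
      using 2 xs by (simp add: energy_eq_shrink_energy)
  next
    case 3
    then show ?thesis
      using optimal_energy_le[OF xs] energy_much_narrower al(1) by fastforce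
  qed
qed

lemma is_minimizer_iff:
  assumes "xs \<in> {0..b/8}" "shrink_energy_deriv a b t xs = 0"
  shows "is_minimizer t (centered_rect a b) S \<longleftrightarrow> S = centered_rect (a - 2*xs) (1/(a - 2*xs))"
proof -
  have "0 < a - 2*xs"
    using assms b_pos b_le_a by auto
  then have adm: "admissible (centered_rect (a - 2*xs) (1/(a - 2*xs)))"
    unfolding admissible_iff_centered_rect by blast
  show ?thesis
  proof
    assume min: "is_minimizer t (centered_rect a b) S"
    then obtain al where al: "0 < al" "S = centered_rect al (1/al)"
      unfolding is_minimizer_def admissible_iff_centered_rect by blast
    have "energy t (centered_rect a b) S \<le> energy t (centered_rect a b) (centered_rect (a - 2*xs) (1/(a - 2*xs)))"
      using min adm unfolding is_minimizer_def by blast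
    then have "al = a - 2*xs"
      using optimal_energy_less[OF assms al(1)] al(2) by force
    then show "S = centered_rect (a - 2*xs) (1/(a - 2*xs))"
      using al(2) by simp
  next
    assume S: "S = centered_rect (a - 2*xs) (1/(a - 2*xs))"
    show "is_minimizer t (centered_rect a b) S"
      unfolding is_minimizer_def
    proof (intro conjI allI impI)
      show "admissible S"
        using adm S by simp
      fix T assume "admissible T"
      then obtain al where al: "0 < al" "T = centered_rect al (1/al)"
        unfolding admissible_iff_centered_rect by blast
      show "energy t (centered_rect a b) S \<le> energy t (centered_rect a b) T"
        using optimal_energy_less[OF assms al(1)] unfolding S al(2) by (cases "al = a - 2*xs") auto
    qed
  qed
qed

lemma four_times_le_step_constant:
  assumes "x \<le> x_lin + err"
  shows "4 * x \<le> t * step_constant L"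
proof -
  have "t * step_constant L = 100 * (t * L^3) + 20 * (L * t) + 20 * t"
    by (simp add: step_constant_def algebra_simps)
  moreover have "0 \<le> t * L^3" "0 \<le> L * t"
    using t_pos L_ge_3 by simp_all
  ultimately show ?thesis
    using assms x_lin_plus_err_le t_pos by linarith
qed

lemma optimal_side_estimates:
  assumes xs: "0 \<le> xs" "\<bar>xs - x_lin\<bar> \<le> err"
  defines "a' \<equiv> a - 2*xs" and "y \<equiv> b * xs / (a - 2*xs)"
  shows "1/a' = b + 2 * y"
    and "\<bar>xs - (2 * (a - b) / (b * (a + b))) * t\<bar> \<le> step_constant L * t\<^sup>2"
    and "\<bar>a' - a\<bar> \<le> t * step_constant L" "\<bar>1/a' - b\<bar> \<le> t * step_constant L"
proof -
  have four_xs: "4 * xs \<le> t * step_constant L"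
    using xs by (intro four_times_le_step_constant) auto
  have a': "3/4 \<le> a'"
    using xs x_lin_plus_err_lt a_ge_1 b_le_1 by (auto simp: a'_def)
  show y: "1/a' = b + 2 * y"
    using a' ab by (simp add: a'_def y_def field_simps)
  have "err \<le> step_constant L * t\<^sup>2"
    unfolding err_def step_constant_def using L_ge_3 by (intro mult_right_mono) auto
  then show "\<bar>xs - (2 * (a - b) / (b * (a + b))) * t\<bar> \<le> step_constant L * t\<^sup>2"
    using xs(2) by (simp add: x_lin_def)
  show "\<bar>a' - a\<bar> \<le> t * step_constant L"
    using four_xs xs(1) by (simp add: a'_def)
  have "2 * b * xs / a' \<le> 2 * xs / (3/4)"
    using a' b_pos b_le_1 xs(1) by (intro frac_le) (auto simp: mult_left_le_one_le)
  moreover have "0 \<le> 2 * b * xs / a'"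
    using a' b_pos xs(1) by simp
  moreover have "1/a' - b = 2 * b * xs / a'"
    using y by (simp add: y_def a'_def)
  ultimately show "\<bar>1/a' - b\<bar> \<le> t * step_constant L"
    using four_xs by simp
qed

lemma optimal_perimeter_le:
  assumes "xs \<in> {0..b/8}" "shrink_energy_deriv a b t xs = 0"
  defines "a' \<equiv> a - 2*xs"
  shows "a' + 1/a' \<le> a + b"
proof -
  have "0 < a'"
    using assms b_pos b_le_a by auto
  then have "2 * a' + 2 * (1/a') + Dist (centered_rect a' (1/a')) (centered_rect a b) / t
      = energy t (centered_rect a b) (centered_rect a' (1/a'))"
    by (intro energy_centered_rect[symmetric]) auto
  also have "\<dots> \<le> 2 * a + 2 * b"
    using optimal_energy_le[OF assms(1,2)] unfolding a'_def .
  finally have "2 * a' + 2 * (1/a') + Dist (centered_rect a' (1/a')) (centered_rect a b) / t \<le> 2 * a + 2 * b" .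
  moreover have "0 \<le> Dist (centered_rect a' (1/a')) (centered_rect a b) / t"
    using t_pos b_pos a_ge_1 by (simp add: Dist_nonneg frontier_centered_rect_nonempty)
  ultimately show ?thesis
    by linarith
qed

lemma measure_sym_diff_optimal_le:
  assumes xs: "0 \<le> xs" "\<bar>xs - x_lin\<bar> \<le> err"
  defines "a' \<equiv> a - 2*xs"
  shows "measure lborel ((centered_rect a b - centered_rect a' (1/a')) \<union> (centered_rect a' (1/a') - centered_rect a b))
      \<le> t * step_constant L"
proof -
  have a': "0 < a'" "a' \<le> a"
    using xs x_lin_plus_err_lt b_pos b_le_a by (auto simp: a'_def)
  have "measure lborel ((centered_rect a b - centered_rect a' (1/a')) \<union> (centered_rect a' (1/a') - centered_rect a b))
      \<le> (a - a') * b + a' * (1/a' - b)"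
    using a' b_pos b_le_inverse by (intro measure_sym_diff_centered_rect_le) auto
  also have "\<dots> = 4 * xs * b"
    using a' ab by (simp add: a'_def algebra_simps)
  also have "\<dots> \<le> 4 * xs"
    using b_pos b_le_1 xs(1) by (simp add: mult_right_le_one_le)
  also have "\<dots> \<le> t * step_constant L"
    using xs by (intro four_times_le_step_constant) auto
  finally show ?thesis .
qed

lemma unique_minimizer_estimates:
  "(\<exists>!R'. is_minimizer t (centered_rect a b) R') \<and>
   (\<forall>R'. is_minimizer t (centered_rect a b) R' \<longrightarrow>
      (\<exists>a' b' x y.
         R' = centered_rect a' b' \<and>
         a' = a - 2 * x \<and>
         \<bar>x - (2 * (a - b) / (b * (a + b))) * t\<bar> \<le> step_constant L * t\<^sup>2 \<and>
         b' = b + 2 * y \<and> y = b * x / (a - 2 * x) \<and>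
         a' + b' \<le> a + b \<and>
         \<bar>a' - a\<bar> \<le> t * step_constant L \<and> \<bar>b' - b\<bar> \<le> t * step_constant L \<and>
         measure lborel ((centered_rect a b - R') \<union> (R' - centered_rect a b)) \<le> t * step_constant L))"
proof -
  obtain xs where xs: "0 \<le> xs" "\<bar>xs - x_lin\<bar> \<le> err" "xs \<le> b/8" "shrink_energy_deriv a b t xs = 0"
    by (rule shrink_energy_deriv_root)
  then have min: "is_minimizer t (centered_rect a b) R' \<longleftrightarrow> R' = centered_rect (a - 2*xs) (1/(a - 2*xs))" for R'
    by (intro is_minimizer_iff) auto
  show ?thesis
    unfolding min using optimal_side_estimates[OF xs(1,2)] optimal_perimeter_le[OF _ xs(4)]
      measure_sym_diff_optimal_le[OF xs(1,2)] xs(1,3)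
    by (intro conjI allI impI exI[of _ "a - 2*xs"] exI[of _ "1/(a - 2*xs)"] exI[of _ xs]
        exI[of _ "b * xs / (a - 2*xs)"]) simp_all
qed

end

theorem theorem2p8:
  fixes \<Lambda> :: real
  shows "\<exists>\<tau>0 > 0. \<exists>C. \<forall>a b :: real.
     0 < b \<and> b \<le> a \<and> a * b = 1 \<and> a + b < \<Lambda> \<longrightarrow>
     (\<forall>\<tau>. 0 < \<tau> \<and> \<tau> < \<tau>0 \<longrightarrow>
       (\<exists>!R'. is_minimizer \<tau> (centered_rect a b) R') \<and>
       (\<forall>R'. is_minimizer \<tau> (centered_rect a b) R' \<longrightarrow>
          (\<exists>a' b' x y.
             R' = centered_rect a' b' \<and>
             a' = a - 2 * x \<and>
             \<bar>x - (2 * (a - b) / (b * (a + b))) * \<tau>\<bar> \<le> C * \<tau>\<^sup>2 \<and>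
             b' = b + 2 * y \<and> y = b * x / (a - 2 * x) \<and>
             a' + b' \<le> a + b \<and>
             \<bar>a' - a\<bar> \<le> \<tau> * C \<and> \<bar>b' - b\<bar> \<le> \<tau> * C \<and>
             measure lborel ((centered_rect a b - R') \<union> (R' - centered_rect a b)) \<le> \<tau> * C)))"
proof -
  define L where "L = max \<Lambda> 3"
  have L: "3 \<le> L" "\<Lambda> \<le> L"
    by (auto simp: L_def)
  then have "0 < 1 / (1000 * L^6)"
    by simp
  then show ?thesis
    by (intro exI[of _ "1 / (1000 * L^6)"] conjI exI[of _ "step_constant L"] allI impI
        small_step.unique_minimizer_estimates, unfold_locales) (use L in auto)
qed

end
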